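(* Let $X$ be a hyperbolic approximation of a metric space $Z$, with vertex set $V$. Assume that for some $v,v'\in V$ there is a vertex $v''\in V$ with $l(v'')\le l(v)$, $l(v'')\le l(v')$, and such that $B(v'')$ intersects both $B(v)$ and $B(v')$. Then there exists a cone point $w$ of $\{v,v',v''\}$ with $l(w)=l(v'')-1$.
   Context: Hyperbolic approximation: let $(Z,d)$ be a metric space and fix $r$ with $0<r\le1/6$. For every $k\in\mathbb{Z}$ choose a maximal $r^k$-separated set $V_k\subset Z$ (distinct points at distance $\ge r^k$, maximal with this property). For $v\in V_k$ let $B(v)$ be the ball in $Z$ of radius $2r^k$ centred at $v$, $\bar B(v)$ the closed ball. The vertex set $V$ consists, for each $k$, of the balls $B(v)$, $v\in V_k$ (equal balls from the same level give the same vertex; equal balls at different levels are different vertices); a vertex from level $k$ has level $l(v)=k$. Two vertices are joined by an edge iff they are on the same level and their closed balls intersect (horizontal edge), or they are on neighbouring levels $k,k+1$ and the ball of the level-$(k+1)$ vertex is contained in the ball of the level-$k$ vertex (radial edge). $X$ carries the path metric with all edges of length $1$. A radial geodesic is an edge path all of whose edges are radial and along which the level function is monotone. For $V'\subset V$, a vertex $u$ is a cone point of $V'$ if $l(u)\le\inf_{v\in V'}l(v)$ and every $v\in V'$ is connected to $u$ by a radial geodesic. *)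

theory Defs
  imports "HOL-Analysis.Analysis"
begin

text \<open>Hyperbolic approximation of a metric space Z (taken to be the whole carrier of a
type of class metric_space).\<close>

definition separated :: "'a::metric_space set \<Rightarrow> real \<Rightarrow> bool" where
  "separated S e \<longleftrightarrow> (\<forall>x\<in>S. \<forall>y\<in>S. x \<noteq> y \<longrightarrow> e \<le> dist x y)"

definition maximal_separated :: "'a::metric_space set \<Rightarrow> real \<Rightarrow> bool" where
  "maximal_separated S e \<longleftrightarrow> separated S e \<and> (\<forall>S'. S \<subseteq> S' \<and> separated S' e \<longrightarrow> S' = S)"

definition ha_vertices :: "real \<Rightarrow> (int \<Rightarrow> 'a::metric_space set) \<Rightarrow> (int \<times> 'a set) set" where
  "ha_vertices r V = {(k, ball v (2 * r powi k)) | k v. v \<in> V k}"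

definition lev :: "int \<times> 'a set \<Rightarrow> int" where
  "lev u = fst u"

definition Bl :: "int \<times> 'a set \<Rightarrow> 'a set" where
  "Bl u = snd u"

definition hor_edge :: "real \<Rightarrow> (int \<Rightarrow> 'a::metric_space set) \<Rightarrow> int \<times> 'a set \<Rightarrow> int \<times> 'a set \<Rightarrow> bool" where
  "hor_edge r V u u' \<longleftrightarrow> u \<in> ha_vertices r V \<and> u' \<in> ha_vertices r V \<and> u \<noteq> u' \<and> lev u = lev u' \<and>
     (\<exists>c\<in>V (lev u). \<exists>c'\<in>V (lev u). Bl u = ball c (2 * r powi lev u) \<and> Bl u' = ball c' (2 * r powi lev u)
        \<and> cball c (2 * r powi lev u) \<inter> cball c' (2 * r powi lev u) \<noteq> {})"

definition rad_edge :: "real \<Rightarrow> (int \<Rightarrow> 'a::metric_space set) \<Rightarrow> int \<times> 'a set \<Rightarrow> int \<times> 'a set \<Rightarrow> bool" where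
  "rad_edge r V u u' \<longleftrightarrow> u \<in> ha_vertices r V \<and> u' \<in> ha_vertices r V \<and>
     ((lev u' = lev u + 1 \<and> Bl u' \<subseteq> Bl u) \<or> (lev u = lev u' + 1 \<and> Bl u \<subseteq> Bl u'))"

definition radial_geodesic :: "real \<Rightarrow> (int \<Rightarrow> 'a::metric_space set) \<Rightarrow> (int \<times> 'a set) list \<Rightarrow> bool" where
  "radial_geodesic r V p \<longleftrightarrow> p \<noteq> [] \<and> set p \<subseteq> ha_vertices r V \<and>
     (\<forall>i. Suc i < length p \<longrightarrow> rad_edge r V (p ! i) (p ! Suc i)) \<and>
     (sorted (map lev p) \<or> sorted (rev (map lev p)))"

definition cone_point :: "real \<Rightarrow> (int \<Rightarrow> 'a::metric_space set) \<Rightarrow> int \<times> 'a set \<Rightarrow> (int \<times> 'a set) set \<Rightarrow> bool" where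
  "cone_point r V u W \<longleftrightarrow> u \<in> ha_vertices r V \<and> (\<forall>v\<in>W. lev u \<le> lev v) \<and>
     (\<forall>v\<in>W. \<exists>p. radial_geodesic r V p \<and> hd p = v \<and> last p = u)"

end

theory Submission
  imports Defs
begin

text \<open>Let \<open>x\<close> be the centre of \<open>v''\<close>, at level \<open>k\<close>, and pick \<open>w \<in> V (k - 1)\<close> with
\<open>d(x, w) < r^(k-1)\<close>, which exists by maximality of \<open>V (k - 1)\<close>; the vertex \<open>W\<close> at \<open>w\<close> is the cone
point. Every vertex at level \<open>j \<ge> k\<close> whose centre \<open>z\<close> satisfies \<open>d(z, x) < 2 r^j + 2 r^k\<close> descends
radially to \<open>W\<close>: at level \<open>k\<close> its ball lies in that of \<open>W\<close>, since \<open>4 r^k + r^(k-1) \<le> 2 r^(k-1) - 2 r^k\<close>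
for \<open>r \<le> 1/6\<close>; above level \<open>k\<close>, a point of \<open>V (j - 1)\<close> within \<open>r^(j-1)\<close> of \<open>z\<close> gives a radial edge one
level down and preserves the invariant. By the triangle inequality the invariant holds for every
vertex above \<open>v''\<close> whose ball meets that of \<open>v''\<close>, in particular for \<open>v\<close>, \<open>v'\<close> and \<open>v''\<close>.\<close>

definition radial_descent ::
    "real \<Rightarrow> (int \<Rightarrow> 'a::metric_space set) \<Rightarrow> int \<times> 'a set \<Rightarrow> int \<times> 'a set \<Rightarrow> bool" where
  "radial_descent r V u u' \<longleftrightarrow>
     (\<exists>p. radial_geodesic r V p \<and> hd p = u \<and> last p = u' \<and> sorted (rev (map lev p)))"

lemma radial_descent_refl: "u \<in> ha_vertices r V \<Longrightarrow> radial_descent r V u u"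
  unfolding radial_descent_def radial_geodesic_def
  by (rule exI[of _ "[u]"]) auto

lemma radial_descent_Cons:
  assumes "rad_edge r V u u'" and "lev u = lev u' + 1" and "radial_descent r V u' u''"
  shows "radial_descent r V u u''"
proof -
  obtain p where p: "radial_geodesic r V p" "hd p = u'" "last p = u''" "sorted (rev (map lev p))"
    using assms(3) unfolding radial_descent_def by blast
  then obtain p' where p_eq: "p = u' # p'"
    unfolding radial_geodesic_def by (cases p) auto
  have "sorted_wrt (\<ge>) (map lev p)"
    using p(4) by (simp add: sorted_wrt_rev)
  then have "sorted_wrt (\<ge>) (map lev (u # p))"
    using assms(2) p_eq by auto
  then have sorted_up: "sorted (rev (map lev (u # p)))"
    by (metis sorted_wrt_rev)
  have edges: "rad_edge r V ((u # p) ! i) ((u # p) ! Suc i)" if "Suc i < length (u # p)" for i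
    using that assms(1) p(1) p_eq unfolding radial_geodesic_def by (cases i) auto
  have "u \<in> ha_vertices r V"
    using assms(1) unfolding rad_edge_def by blast
  then have "radial_geodesic r V (u # p)"
    using p(1) edges sorted_up unfolding radial_geodesic_def by auto
  then show ?thesis
    unfolding radial_descent_def using p sorted_up p_eq by (intro exI[of _ "u # p"]) auto
qed

lemma ball_subset_ball_dist:
  fixes a b :: "'a::metric_space"
  assumes "dist a b + s \<le> t"
  shows "ball a s \<subseteq> ball b t"
proof
  fix y assume "y \<in> ball a s"
  moreover have "dist b y \<le> dist a b + dist a y"
    by (metis dist_commute dist_triangle)
  ultimately show "y \<in> ball b t"
    using assms by simp
qed

lemma maximal_separated_near:
  fixes S :: "'a::metric_space set"
  assumes "maximal_separated S e" and "0 < e"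
  obtains z where "z \<in> S" and "dist z y < e"
proof (rule ccontr)
  assume "\<not> thesis"
  with that have far: "\<forall>z\<in>S. e \<le> dist z y"
    by (meson not_le)
  then have "y \<notin> S"
    using assms(2) by force
  moreover have "separated (insert y S) e"
    using assms(1) far unfolding maximal_separated_def separated_def
    by (auto simp: dist_commute)
  ultimately show False
    using assms(1) unfolding maximal_separated_def by blast
qed

lemma ha_vertex_of_centre: "z \<in> V j \<Longrightarrow> (j, ball z (2 * r powi j)) \<in> ha_vertices r V"
  unfolding ha_vertices_def by blast

lemma rad_edge_of_close_centres:
  assumes "z \<in> V i" and "z' \<in> V j" and "i = j + 1"
    and "dist z z' + 2 * r powi i \<le> 2 * r powi j"
  shows "rad_edge r V (i, ball z (2 * r powi i)) (j, ball z' (2 * r powi j))"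
  using ball_subset_ball_dist[OF assms(4)] ha_vertex_of_centre[of z V i r, OF assms(1)]
    ha_vertex_of_centre[of z' V j r, OF assms(2)] assms(3)
  unfolding rad_edge_def lev_def Bl_def by auto

lemma powi_succ_le:
  fixes r :: real
  assumes "0 < r" and "r \<le> 1/6"
  shows "6 * r powi (j + 1) \<le> r powi j"
proof -
  have "r powi (j + 1) = r powi j * r"
    using assms(1) by (simp add: power_int_add_1)
  moreover have "r powi j * r \<le> r powi j * (1/6)"
    using assms by (intro mult_left_mono) auto
  ultimately show ?thesis
    by simp
qed

lemma radial_descent_to_parent:
  fixes r :: real and V :: "int \<Rightarrow> 'a::metric_space set"
  assumes r: "0 < r" "r \<le> 1/6"
    and ms: "\<forall>k. maximal_separated (V k) (r powi k)"
    and w: "w \<in> V (k - 1)" "dist x w < r powi (k - 1)"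
    and "k \<le> j" and "z \<in> V j" and "dist z x < 2 * r powi j + 2 * r powi k"
  shows "radial_descent r V (j, ball z (2 * r powi j)) (k - 1, ball w (2 * r powi (k - 1)))"
  using assms(6-8)
proof (induction j arbitrary: z rule: int_ge_induct)
  case base
  have "6 * r powi k \<le> r powi (k - 1)"
    using powi_succ_le[OF r, of "k - 1"] by simp
  moreover have "dist z w \<le> dist z x + dist x w"
    by (rule dist_triangle)
  ultimately have "dist z w + 2 * r powi k \<le> 2 * r powi (k - 1)"
    using base.prems(2) w(2) by linarith
  then have "rad_edge r V (k, ball z (2 * r powi k)) (k - 1, ball w (2 * r powi (k - 1)))"
    using rad_edge_of_close_centres[OF base.prems(1) w(1)] by simp
  then show ?case
    using radial_descent_Cons radial_descent_refl ha_vertex_of_centre[of w V, OF w(1)]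
    by (fastforce simp: lev_def)
next
  case (step j)
  obtain z' where z': "z' \<in> V j" "dist z' z < r powi j"
    using maximal_separated_near[OF ms[rule_format, of j]] r(1) by auto
  have small: "6 * r powi (j + 1) \<le> r powi j"
    by (rule powi_succ_le[OF r])
  have pos: "0 < r powi (j + 1)"
    using r(1) by simp
  moreover have "dist z' x \<le> dist z' z + dist z x"
    by (rule dist_triangle)
  ultimately have "dist z' x < 2 * r powi j + 2 * r powi k"
    using z'(2) step.prems(2) small by linarith
  then have descent: "radial_descent r V (j, ball z' (2 * r powi j)) (k - 1, ball w (2 * r powi (k - 1)))"
    using step.IH z'(1) by blast
  have "dist z z' + 2 * r powi (j + 1) \<le> 2 * r powi j"
    using z'(2) small pos dist_commute[of z z'] by linarith
  then have "rad_edge r V (j + 1, ball z (2 * r powi (j + 1))) (j, ball z' (2 * r powi j))"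
    using rad_edge_of_close_centres step.prems(1) z'(1) by blast
  then show ?case
    using radial_descent_Cons[OF _ _ descent] by (simp add: lev_def)
qed

theorem lemma3p9:
  fixes r :: real and V :: "int \<Rightarrow> 'a::metric_space set"
    and v v' v'' :: "int \<times> 'a set"
  assumes "0 < r" and "r \<le> 1/6"
    and "\<forall>k. maximal_separated (V k) (r powi k)"
    and "v \<in> ha_vertices r V" and "v' \<in> ha_vertices r V" and "v'' \<in> ha_vertices r V"
    and "lev v'' \<le> lev v" and "lev v'' \<le> lev v'"
    and "Bl v'' \<inter> Bl v \<noteq> {}" and "Bl v'' \<inter> Bl v' \<noteq> {}"
  shows "\<exists>w. cone_point r V w {v, v', v''} \<and> lev w = lev v'' - 1"
proof -
  obtain k x where v'': "v'' = (k, ball x (2 * r powi k))"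
    using assms(6) unfolding ha_vertices_def by blast
  obtain w where w: "w \<in> V (k - 1)" "dist x w < r powi (k - 1)"
    using maximal_separated_near[OF assms(3)[rule_format, of "k - 1"], of x] assms(1)
    by (auto simp: dist_commute)
  define W where "W = (k - 1, ball w (2 * r powi (k - 1)))"
  have descent: "radial_descent r V u W"
    if vertex: "u \<in> ha_vertices r V" and above: "lev v'' \<le> lev u"
      and meets: "Bl v'' \<inter> Bl u \<noteq> {}" for u
  proof -
    obtain j z where u: "u = (j, ball z (2 * r powi j))" "z \<in> V j"
      using vertex unfolding ha_vertices_def by blast
    obtain y where "dist x y < 2 * r powi k" "dist z y < 2 * r powi j"
      using meets unfolding u v'' Bl_def by auto
    then have "dist z x < 2 * r powi j + 2 * r powi k"
      using dist_triangle2[of z x y] by linarith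
    then show ?thesis
      using radial_descent_to_parent[OF assms(1-3) w] u above
      unfolding W_def v'' lev_def by simp
  qed
  have "Bl v'' \<inter> Bl v'' \<noteq> {}"
    unfolding v'' Bl_def using assms(1) by (simp add: not_le)
  then have "\<forall>u\<in>{v, v', v''}. radial_descent r V u W"
    using descent assms(4-10) by auto
  moreover have "W \<in> ha_vertices r V" and level: "lev W = lev v'' - 1"
    using ha_vertex_of_centre[of w V, OF w(1)] unfolding W_def v'' lev_def by simp_all
  ultimately have "cone_point r V W {v, v', v''}"
    using assms(7,8) unfolding cone_point_def radial_descent_def by auto
  with level show ?thesis
    by blast
qed

end
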